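(* Let $k,\ell \in \mathbb{N}$, and let $G$ be an $\ell$-empty ordered graph. If the irreducible block decomposition of $G$ contains a block of order at least $4k\ell$, then $S_n(G) \geqslant F_{n,\ell}$ for each $n \leqslant k$.
   Context: Ordered graphs of order $n$ have vertex set $[n]$ with the natural order. The length of an edge $ij$ is $|i-j|$; $G$ is $\ell$-empty if it has no edges of length at least $\ell$. A pair of vertices $u<v$ separates the edges of $G$ if every edge $ij$ ($i<j$) has $j\leqslant u$ or $v\leqslant i$; $G$ is irreducible if no pair separates its edges. For ordered graphs $G_1,\dots,G_m$, $G_1+\dots+G_m$ places copies of them consecutively from left to right with no edges between copies. Every ordered graph $G$ is uniquely $G=G_1+\dots+G_m$ with each $G_i$ irreducible; this is its irreducible block decomposition. $S_n(G)$ is the number of distinct (non-isomorphic as ordered graphs) induced ordered subgraphs of $G$ of order $n$. $F_{n,\ell}$: $F_{n,\ell}=0$ for $n<0$, $F_{0,\ell}=1$, $F_{n,\ell}=F_{n-1,\ell}+\dots+F_{n-\ell,\ell}$ for $n\geqslant1$. *)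

theory Defs
  imports Main
begin

text \<open>An ordered graph of order n: vertex set {1..n} with the natural order;
  edges stored as pairs (i,j) with 1 \<le> i < j \<le> n.  Two ordered graphs are
  isomorphic (as ordered graphs) iff they are equal in this representation.\<close>

type_synonym ograph = "nat \<times> (nat \<times> nat) set"

definition ord_of :: "ograph \<Rightarrow> nat" where "ord_of G = fst G"
definition edges :: "ograph \<Rightarrow> (nat \<times> nat) set" where "edges G = snd G"

definition wf_ograph :: "ograph \<Rightarrow> bool" where
  "wf_ograph G \<longleftrightarrow> (\<forall>(i,j)\<in>edges G. 1 \<le> i \<and> i < j \<and> j \<le> ord_of G)"

definition l_empty :: "nat \<Rightarrow> ograph \<Rightarrow> bool" where
  "l_empty l G \<longleftrightarrow> (\<forall>(i,j)\<in>edges G. j - i < l)"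

definition separates :: "ograph \<Rightarrow> nat \<Rightarrow> nat \<Rightarrow> bool" where
  "separates G u v \<longleftrightarrow> (\<forall>(i,j)\<in>edges G. j \<le> u \<or> v \<le> i)"

definition irreducible :: "ograph \<Rightarrow> bool" where
  "irreducible G \<longleftrightarrow> \<not> (\<exists>u v. 1 \<le> u \<and> u < v \<and> v \<le> ord_of G \<and> separates G u v)"

definition oplus :: "ograph \<Rightarrow> ograph \<Rightarrow> ograph" where
  "oplus G1 G2 = (ord_of G1 + ord_of G2,
     edges G1 \<union> (\<lambda>(i,j). (i + ord_of G1, j + ord_of G1)) ` edges G2)"

definition osum :: "ograph list \<Rightarrow> ograph" where
  "osum Gs = foldr oplus Gs (0, {})"

definition block_decomposition :: "ograph \<Rightarrow> ograph list \<Rightarrow> bool" where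
  "block_decomposition G Gs \<longleftrightarrow>
     (\<forall>B\<in>set Gs. wf_ograph B \<and> ord_of B \<ge> 1 \<and> irreducible B) \<and> osum Gs = G"

text \<open>Induced ordered subgraph on A \<subseteq> {1..ord_of G}, relabelled order-preservingly to {1..card A}.\<close>
definition induced :: "ograph \<Rightarrow> nat set \<Rightarrow> ograph" where
  "induced G A = (card A,
     {(i,j). 1 \<le> i \<and> i < j \<and> j \<le> card A \<and>
        (sorted_list_of_set A ! (i - 1), sorted_list_of_set A ! (j - 1)) \<in> edges G})"

definition S :: "nat \<Rightarrow> ograph \<Rightarrow> nat" where
  "S n G = card {induced G A | A. A \<subseteq> {1..ord_of G} \<and> card A = n}"

fun F :: "nat \<Rightarrow> nat \<Rightarrow> nat" where
  "F 0 l = 1"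
| "F (Suc n) l = (\<Sum>i\<in>{1..min l (Suc n)}. F (Suc n - i) l)"

end

theory Submission
  imports Defs
begin

(* An irreducible block B of order at least 4kl has every gap between consecutive vertices
   crossed by an edge. Starting from a vertex p of B and repeatedly either adding a missing
   vertex of the current span or following an edge across its right end, one grows, for each
   a <= l, an a-vertex set near p inducing an irreducible ordered graph; as edges are shorter
   than l, the span stays within distance l of p. Choosing such sets in k windows of B that are
   more than l apart, a composition (a_1, ..., a_m) of n with parts at most l (there are F_{n,l}
   of them, and m <= n <= k) yields an induced subgraph of order n that is the ordered sum of
   irreducible graphs of orders a_1, ..., a_m. By uniqueness of the irreducible decomposition,
   distinct compositions give distinct induced subgraphs. *)

definition gap_crossed :: "ograph \<Rightarrow> nat \<Rightarrow> bool" where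
  "gap_crossed G u \<longleftrightarrow> (\<exists>(i,j)\<in>edges G. i \<le> u \<and> u < j)"

lemma irreducible_iff_gap_crossed:
  "irreducible H \<longleftrightarrow> (\<forall>u. 1 \<le> u \<longrightarrow> u < ord_of H \<longrightarrow> gap_crossed H u)"
proof
  assume irr: "irreducible H"
  show "\<forall>u. 1 \<le> u \<longrightarrow> u < ord_of H \<longrightarrow> gap_crossed H u"
  proof clarify
    fix u assume "1 \<le> u" "u < ord_of H"
    then have "\<not> separates H u (Suc u)"
      using irr unfolding irreducible_def by auto
    then show "gap_crossed H u"
      unfolding separates_def gap_crossed_def by fastforce
  qed
next
  assume gaps: "\<forall>u. 1 \<le> u \<longrightarrow> u < ord_of H \<longrightarrow> gap_crossed H u"
  show "irreducible H"
    unfolding irreducible_def separates_def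
  proof clarify
    fix u v assume "1 \<le> u" "u < v" "v \<le> ord_of H" and sep: "\<forall>(i,j)\<in>edges H. j \<le> u \<or> v \<le> i"
    then obtain i j where "(i,j) \<in> edges H" "i \<le> u" "u < j"
      using gaps unfolding gap_crossed_def by fastforce
    with sep \<open>u < v\<close> show False by fastforce
  qed
qed

lemma ograph_eqI: "ord_of G = ord_of H \<Longrightarrow> edges G = edges H \<Longrightarrow> G = H"
  by (simp add: ord_of_def edges_def prod_eq_iff)

lemma ord_of_oplus [simp]: "ord_of (oplus G H) = ord_of G + ord_of H"
  by (simp add: oplus_def ord_of_def)

lemma mem_edges_oplus:
  "(i, j) \<in> edges (oplus G H) \<longleftrightarrow>
     (i, j) \<in> edges G \<or> (ord_of G \<le> i \<and> ord_of G \<le> j \<and> (i - ord_of G, j - ord_of G) \<in> edges H)"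
  by (force simp: oplus_def edges_def ord_of_def)

lemma oplus_assoc: "oplus (oplus G H) K = oplus G (oplus H K)"
  by (rule ograph_eqI) (auto simp: mem_edges_oplus)

lemma oplus_empty_left: "oplus (0, {}) H = H"
  by (simp add: oplus_def ord_of_def edges_def)

lemma osum_Cons: "osum (H # Hs) = oplus H (osum Hs)"
  by (simp add: osum_def)

lemma osum_append: "osum (Gs @ Hs) = oplus (osum Gs) (osum Hs)"
  by (induction Gs) (simp_all add: osum_def oplus_empty_left oplus_assoc)

lemma edges_oplus_left:
  assumes "wf_ograph G" "wf_ograph H"
  shows "edges G = {(i, j) \<in> edges (oplus G H). j \<le> ord_of G}"
  using assms unfolding wf_ograph_def by (auto simp: mem_edges_oplus)

lemma edges_oplus_right:
  assumes "wf_ograph G"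
  shows "edges H = {(i, j). (i + ord_of G, j + ord_of G) \<in> edges (oplus G H)}"
  using assms unfolding wf_ograph_def by (fastforce simp: mem_edges_oplus)

lemma oplus_eq_irreducible_ord_le:
  assumes eq: "oplus G H = oplus G' H'" and "wf_ograph G" "wf_ograph H"
    and "1 \<le> ord_of G" and "irreducible G'"
  shows "ord_of G' \<le> ord_of G"
proof (rule ccontr)
  assume "\<not> ord_of G' \<le> ord_of G"
  then obtain i j where ij: "(i, j) \<in> edges G'" "i \<le> ord_of G" "ord_of G < j"
    using assms(4,5) unfolding irreducible_iff_gap_crossed gap_crossed_def by fastforce
  then have "(i, j) \<in> edges (oplus G H)"
    unfolding eq mem_edges_oplus by blast
  with ij assms(2,3) show False
    unfolding mem_edges_oplus wf_ograph_def by fastforce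
qed

lemma oplus_cancel:
  assumes eq: "oplus G H = oplus G' H'"
    and wf: "wf_ograph G" "wf_ograph H" "wf_ograph G'" "wf_ograph H'"
    and irr: "irreducible G" "irreducible G'"
    and ne: "1 \<le> ord_of G" "1 \<le> ord_of G'"
  shows "G = G' \<and> H = H'"
proof -
  have ord: "ord_of G = ord_of G'"
    using oplus_eq_irreducible_ord_le[OF eq wf(1,2) ne(1) irr(2)]
      oplus_eq_irreducible_ord_le[OF eq[symmetric] wf(3,4) ne(2) irr(1)] by simp
  have "G = G'"
    using edges_oplus_left[OF wf(1,2)] edges_oplus_left[OF wf(3,4)] eq ord
    by (intro ograph_eqI) simp_all
  moreover have "H = H'"
  proof (rule ograph_eqI)
    show "ord_of H = ord_of H'"
      using arg_cong[OF eq, of ord_of] ord by simp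
    show "edges H = edges H'"
      using edges_oplus_right[OF wf(1), of H] edges_oplus_right[OF wf(3), of H'] eq ord by simp
  qed
  ultimately show ?thesis ..
qed

lemma block_gaps_crossed:
  assumes "block_decomposition G Gs" "B \<in> set Gs"
  obtains s where "1 \<le> s" "s + ord_of B \<le> ord_of G + 1"
    "\<And>u. s \<le> u \<Longrightarrow> u + 1 < s + ord_of B \<Longrightarrow> gap_crossed G u"
proof -
  obtain Ls Rs where Gs: "Gs = Ls @ B # Rs"
    using assms(2) split_list by metis
  let ?o = "ord_of (osum Ls)"
  have G: "G = oplus (osum Ls) (oplus B (osum Rs))"
    using assms(1) Gs by (simp add: block_decomposition_def osum_append osum_Cons)
  have "gap_crossed G u" if u: "?o + 1 \<le> u" "u + 1 < ?o + 1 + ord_of B" for u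
  proof -
    have "irreducible B"
      using assms unfolding block_decomposition_def by blast
    then have "gap_crossed B (u - ?o)"
      using u unfolding irreducible_iff_gap_crossed by simp
    then obtain i j where "(i, j) \<in> edges B" "i \<le> u - ?o" "u - ?o < j"
      unfolding gap_crossed_def by blast
    then have "(i + ?o, j + ?o) \<in> edges G" "i + ?o \<le> u" "u < j + ?o"
      using u unfolding G by (auto simp: mem_edges_oplus)
    then show ?thesis
      unfolding gap_crossed_def by blast
  qed
  moreover have "?o + 1 + ord_of B \<le> ord_of G + 1"
    unfolding G by simp
  ultimately show ?thesis
    using that[of "?o + 1"] by simp
qed

lemma ord_of_induced [simp]: "ord_of (induced G A) = card A"
  by (simp add: induced_def ord_of_def)

lemma mem_edges_induced:
  "(i, j) \<in> edges (induced G A) \<longleftrightarrow> 1 \<le> i \<and> i < j \<and> j \<le> card A \<and>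
     (sorted_list_of_set A ! (i - 1), sorted_list_of_set A ! (j - 1)) \<in> edges G"
  by (simp add: induced_def edges_def)

lemma wf_induced: "wf_ograph (induced G A)"
  unfolding wf_ograph_def by (auto simp: mem_edges_induced)

lemma sorted_list_of_set_Un_less:
  fixes A B :: "'a::linorder set"
  assumes "finite A" "finite B" "\<forall>x\<in>A. \<forall>y\<in>B. x < y"
  shows "sorted_list_of_set (A \<union> B) = sorted_list_of_set A @ sorted_list_of_set B"
proof (rule sorted_list_of_set_unique[THEN iffD1])
  have "A \<inter> B = {}"
    using assms(3) by auto
  then show "sorted_wrt (<) (sorted_list_of_set A @ sorted_list_of_set B) \<and>
      set (sorted_list_of_set A @ sorted_list_of_set B) = A \<union> B \<and>
      length (sorted_list_of_set A @ sorted_list_of_set B) = card (A \<union> B)"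
    using assms by (simp add: sorted_wrt_append card_Un_disjoint)
qed (use assms in simp)

lemma induced_Un_oplus:
  assumes fin: "finite A" "finite B"
    and apart: "\<forall>x\<in>A. \<forall>y\<in>B. x < y \<and> (x, y) \<notin> edges G"
  shows "induced G (A \<union> B) = oplus (induced G A) (induced G B)"
proof (rule ograph_eqI)
  have "A \<inter> B = {}"
    using apart by auto
  then show card: "ord_of (induced G (A \<union> B)) = ord_of (oplus (induced G A) (induced G B))"
    using fin by (simp add: card_Un_disjoint)
  let ?a = "card A" and ?LA = "sorted_list_of_set A" and ?LB = "sorted_list_of_set B"
  have nth: "sorted_list_of_set (A \<union> B) ! i = (if i < ?a then ?LA ! i else ?LB ! (i - ?a))" for i
    using sorted_list_of_set_Un_less[OF fin] apart by (simp add: nth_append)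
  have inA: "?LA ! i \<in> A" if "i < ?a" for i
    using that fin(1) by (metis length_sorted_list_of_set nth_mem set_sorted_list_of_set)
  have inB: "?LB ! i \<in> B" if "i < card B" for i
    using that fin(2) by (metis length_sorted_list_of_set nth_mem set_sorted_list_of_set)
  show "edges (induced G (A \<union> B)) = edges (oplus (induced G A) (induced G B))"
  proof (intro set_eqI, clarify)
    fix i j
    show "(i, j) \<in> edges (induced G (A \<union> B)) \<longleftrightarrow> (i, j) \<in> edges (oplus (induced G A) (induced G B))"
    proof (cases "j \<le> ?a \<or> ?a < i")
      case True
      then show ?thesis
        using card by (auto simp: mem_edges_induced mem_edges_oplus nth)
    next
      case False
      have "(sorted_list_of_set (A \<union> B) ! (i - 1), sorted_list_of_set (A \<union> B) ! (j - 1)) \<notin> edges G"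
        if "1 \<le> i" "j \<le> card (A \<union> B)"
      proof -
        have "i - 1 < ?a" "\<not> j - 1 < ?a" "j - 1 - ?a < card B"
          using False that card by auto
        then show ?thesis
          using apart inA[of "i - 1"] inB[of "j - 1 - ?a"] by (simp add: nth)
      qed
      with False show ?thesis
        by (auto simp: mem_edges_induced mem_edges_oplus)
    qed
  qed
qed

definition gap_connected :: "ograph \<Rightarrow> nat set \<Rightarrow> nat \<Rightarrow> nat \<Rightarrow> bool" where
  "gap_connected G T lo hi \<longleftrightarrow> lo \<in> T \<and> hi \<in> T \<and> T \<subseteq> {lo..hi} \<and>
     (\<forall>u. lo \<le> u \<longrightarrow> u < hi \<longrightarrow> (\<exists>x\<in>T. \<exists>y\<in>T. (x, y) \<in> edges G \<and> x \<le> u \<and> u < y))"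

lemma sorted_list_of_set_nth_le_iff:
  fixes A :: "'a::linorder set"
  assumes "i < card A" "j < card A"
  shows "sorted_list_of_set A ! i \<le> sorted_list_of_set A ! j \<longleftrightarrow> i \<le> j"
proof -
  have sorted: "sorted_wrt (<) (sorted_list_of_set A)"
    by simp
  show ?thesis
  proof
    assume le: "sorted_list_of_set A ! i \<le> sorted_list_of_set A ! j"
    show "i \<le> j"
    proof (rule ccontr)
      assume "\<not> i \<le> j"
      then show False
        using le sorted_wrt_nth_less[OF sorted, of j i] assms by simp
    qed
  next
    assume "i \<le> j"
    then show "sorted_list_of_set A ! i \<le> sorted_list_of_set A ! j"
      using sorted_nth_mono[OF strict_sorted_imp_sorted[OF sorted]] assms by simp
  qed
qed

lemma irreducible_induced:
  assumes fin: "finite T" and conn: "gap_connected G T lo hi"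
  shows "irreducible (induced G T)"
  unfolding irreducible_iff_gap_crossed
proof clarify
  fix u assume u: "1 \<le> u" "u < ord_of (induced G T)"
  let ?L = "sorted_list_of_set T"
  have index: "x \<in> T \<longleftrightarrow> (\<exists>i < card T. ?L ! i = x)" for x
    using fin by (metis in_set_conv_nth length_sorted_list_of_set set_sorted_list_of_set)
  have idx: "u - 1 < card T" "u < card T"
    using u by simp_all
  then have "?L ! (u - 1) \<in> T" "?L ! u \<in> T"
    using index by blast+
  moreover have "\<not> ?L ! u \<le> ?L ! (u - 1)"
    using sorted_list_of_set_nth_le_iff[OF idx(2,1)] u(1) by simp
  ultimately have "lo \<le> ?L ! (u - 1)" "?L ! (u - 1) < hi"
    using conn unfolding gap_connected_def by fastforce+
  then obtain x y where xy: "x \<in> T" "y \<in> T" "(x, y) \<in> edges G" "x \<le> ?L ! (u - 1)" "?L ! (u - 1) < y"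
    using conn unfolding gap_connected_def by blast
  obtain ix iy where ixy: "ix < card T" "?L ! ix = x" "iy < card T" "?L ! iy = y"
    using xy(1,2) index by metis
  have "ix \<le> u - 1" "\<not> iy \<le> u - 1"
    using xy(4,5) ixy sorted_list_of_set_nth_le_iff[OF ixy(1) idx(1)]
      sorted_list_of_set_nth_le_iff[OF ixy(3) idx(1)] by auto
  then have "(ix + 1, iy + 1) \<in> edges (induced G T)" "ix + 1 \<le> u" "u < iy + 1"
    using u ixy xy(3) by (auto simp: mem_edges_induced)
  then show "gap_crossed (induced G T) u"
    unfolding gap_crossed_def by blast
qed

(* Invariant of the growth process around p; the last two bounds confine T to
   (p - l, p + card T + l - 1). *)
definition window_at :: "ograph \<Rightarrow> nat \<Rightarrow> nat \<Rightarrow> nat set \<Rightarrow> nat \<Rightarrow> nat \<Rightarrow> bool" where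
  "window_at G l p T lo hi \<longleftrightarrow> finite T \<and> gap_connected G T lo hi \<and> 1 \<le> lo \<and> hi \<le> ord_of G \<and>
     lo \<le> p \<and> p \<le> hi \<and> p < lo + l \<and> hi + 2 \<le> lo + card T + l"

lemma window_at_singleton:
  assumes "1 \<le> p" "p \<le> ord_of G" "1 \<le> l"
  shows "window_at G l p {p} p p"
  using assms unfolding window_at_def gap_connected_def by simp

lemma window_at_fill:
  assumes win: "window_at G l p T lo hi" and z: "z \<in> {lo..hi}"
  shows "window_at G l p (insert z T) lo hi"
proof -
  have "gap_connected G (insert z T) lo hi"
    using win z unfolding window_at_def gap_connected_def by blast
  moreover have "card T \<le> card (insert z T)"
    using win unfolding window_at_def by (simp add: card_insert_le)
  ultimately show ?thesis
    using win unfolding window_at_def by simp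
qed

lemma window_at_extend:
  assumes win: "window_at G l p T lo hi" and full: "T = {lo..hi}"
    and ij: "(i, j) \<in> edges G" "lo \<le> i" "i \<le> hi" "hi < j"
    and wf: "wf_ograph G" and short: "l_empty l G"
  shows "window_at G l p (insert j T) lo j"
proof -
  have "j \<le> ord_of G" "j < i + l"
    using ij(1) wf short unfolding wf_ograph_def l_empty_def by fastforce+
  moreover have "card (insert j T) = hi - lo + 2"
    using full win ij unfolding window_at_def by simp
  moreover have "\<exists>x\<in>insert j T. \<exists>y\<in>insert j T. (x, y) \<in> edges G \<and> x \<le> u \<and> u < y"
    if "lo \<le> u" "u < j" for u
  proof (cases "u < hi")
    case True
    with that win show ?thesis
      unfolding window_at_def gap_connected_def by blast
  next
    case False
    with that ij full show ?thesis by auto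
  qed
  ultimately show ?thesis
    using win ij full unfolding window_at_def gap_connected_def by auto
qed

(* When the crossing edge (i, j) starts left of lo, it alone crosses every gap of [i, j];
   dropping hi makes the set grow by exactly one. *)
lemma window_at_replace_max:
  assumes win: "window_at G l p T lo hi"
    and ij: "(i, j) \<in> edges G" "i < lo" "hi < j"
    and wf: "wf_ograph G" and short: "l_empty l G"
  shows "window_at G l p (insert i (insert j (T - {hi}))) i j"
proof -
  let ?T = "insert i (insert j (T - {hi}))"
  have fin: "finite ?T" and sub: "T \<subseteq> {lo..hi}" and p: "lo \<le> p" "p \<le> hi"
    using win unfolding window_at_def gap_connected_def by simp_all
  have "1 \<le> i" "j \<le> ord_of G" "j < i + l"
    using ij(1) wf short unfolding wf_ograph_def l_empty_def by fastforce+
  moreover have "gap_connected G ?T i j"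
    using sub ij p unfolding gap_connected_def by auto
  moreover have "2 \<le> card ?T"
    using card_mono[OF fin, of "{i, j}"] ij(2,3) p by simp
  ultimately show ?thesis
    using fin ij(2,3) p unfolding window_at_def by simp
qed

lemma window_at_grow:
  assumes win: "window_at G l p T lo hi"
    and wf: "wf_ograph G" and short: "l_empty l G"
    and full_crossed: "T = {lo..hi} \<Longrightarrow> gap_crossed G hi"
  obtains T' lo' hi' where "window_at G l p T' lo' hi'" "card T' = Suc (card T)"
proof (cases "T = {lo..hi}")
  case False
  have fin: "finite T" and sub: "T \<subseteq> {lo..hi}"
    using win unfolding window_at_def gap_connected_def by simp_all
  with False obtain z where "z \<in> {lo..hi}" "z \<notin> T" by blast
  then have "window_at G l p (insert z T) lo hi" "card (insert z T) = Suc (card T)"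
    using window_at_fill[OF win] fin by simp_all
  then show ?thesis
    by (rule that)
next
  case True
  then obtain i j where ij: "(i, j) \<in> edges G" "i \<le> hi" "hi < j"
    using full_crossed unfolding gap_crossed_def by blast
  show ?thesis
  proof (cases "lo \<le> i")
    case True
    with ij have "j \<notin> T"
      using \<open>T = {lo..hi}\<close> by simp
    then show ?thesis
      using that window_at_extend[OF win \<open>T = {lo..hi}\<close> ij(1) True ij(2,3) wf short] \<open>T = {lo..hi}\<close>
      by simp
  next
    case False
    have "hi \<in> T" "finite T" "T \<subseteq> {lo..hi}"
      using win unfolding window_at_def gap_connected_def by simp_all
    moreover from this have "0 < card T"
      using card_gt_0_iff by blast
    ultimately have "card (insert i (insert j (T - {hi}))) = Suc (card T)"
      using False ij
      by (auto simp: card_insert_if card_Suc_Diff1 subset_iff)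
    then show ?thesis
      using that window_at_replace_max[OF win ij(1) _ ij(3) wf short] False by simp
  qed
qed

lemma window_at_exists:
  assumes wf: "wf_ograph G" and short: "l_empty l G"
    and gaps: "\<And>u. s \<le> u \<Longrightarrow> u + 1 < s + m \<Longrightarrow> gap_crossed G u"
    and range: "s + m \<le> ord_of G + 1" "1 \<le> s" "s \<le> p" and l: "1 \<le> l"
  shows "1 \<le> c \<Longrightarrow> p + c \<le> s + m \<Longrightarrow> \<exists>T lo hi. window_at G l p T lo hi \<and> card T = c"
proof (induction c)
  case 0
  then show ?case by simp
next
  case (Suc c)
  show ?case
  proof (cases "c = 0")
    case True
    have "window_at G l p {p} p p"
      using window_at_singleton[of p G l] Suc.prems range l by simp
    with True show ?thesis
      by (intro exI[of _ "{p}"]) auto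
  next
    case False
    then obtain T lo hi where win: "window_at G l p T lo hi" and card: "card T = c"
      using Suc by auto
    have "gap_crossed G hi" if "T = {lo..hi}"
    proof (rule gaps)
      have "lo \<le> p" "p \<le> hi"
        using win unfolding window_at_def by simp_all
      moreover have "hi + 1 = lo + c"
        using that card \<open>p \<le> hi\<close> \<open>lo \<le> p\<close> by simp
      ultimately show "s \<le> hi" "hi + 1 < s + m"
        using range Suc.prems by simp_all
    qed
    then obtain T' lo' hi' where "window_at G l p T' lo' hi'" "card T' = Suc c"
      using window_at_grow[OF win wf short] card by metis
    then show ?thesis by blast
  qed
qed

(* The t-th window is (s + 4lt, s + 4lt + 3l): distinct windows are more than l apart, so no
   edge of an l-empty graph joins them. *)
definition good_window :: "ograph \<Rightarrow> nat \<Rightarrow> nat \<Rightarrow> nat \<Rightarrow> nat \<Rightarrow> nat set \<Rightarrow> bool" where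
  "good_window G l s t a T \<longleftrightarrow> finite T \<and> card T = a \<and> T \<subseteq> {1..ord_of G} \<and>
     irreducible (induced G T) \<and> T \<subseteq> {s + 4 * l * t <..< s + 4 * l * t + 3 * l}"

definition good_windows :: "ograph \<Rightarrow> nat \<Rightarrow> nat \<Rightarrow> nat \<Rightarrow> (nat \<Rightarrow> nat \<Rightarrow> nat set) \<Rightarrow> bool" where
  "good_windows G l k s W \<longleftrightarrow>
     (\<forall>a t. 1 \<le> a \<longrightarrow> a \<le> l \<longrightarrow> t < k \<longrightarrow> good_window G l s t a (W a t))"

lemma good_window_exists:
  assumes wf: "wf_ograph G" and short: "l_empty l G"
    and gaps: "\<And>u. s \<le> u \<Longrightarrow> u + 1 < s + m \<Longrightarrow> gap_crossed G u"
    and range: "s + m \<le> ord_of G + 1" "1 \<le> s" and m: "4 * k * l \<le> m"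
    and a: "1 \<le> a" "a \<le> l" and t: "t < k"
  obtains T where "good_window G l s t a T"
proof -
  let ?p = "s + l + 4 * l * t"
  have "4 * l * (t + 1) \<le> 4 * l * k"
    using t by (intro mult_le_mono2) simp
  then have "?p + a \<le> s + m"
    using a m by (simp add: algebra_simps)
  then obtain T lo hi where win: "window_at G l ?p T lo hi" and card: "card T = a"
    using window_at_exists[OF wf short gaps range, of ?p a] a by auto
  have conn: "gap_connected G T lo hi"
    using win unfolding window_at_def by simp
  have "T \<subseteq> {lo..hi}" "hi + 2 \<le> lo + a + l" "?p < lo + l" "lo \<le> ?p"
    using win conn card unfolding window_at_def gap_connected_def by simp_all
  then have "T \<subseteq> {s + 4 * l * t <..< s + 4 * l * t + 3 * l}"
    using a by auto
  moreover have "T \<subseteq> {1..ord_of G}"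
    using win conn unfolding window_at_def gap_connected_def by auto
  moreover have "finite T"
    using win unfolding window_at_def by simp
  ultimately show ?thesis
    using that card irreducible_induced[OF _ conn] unfolding good_window_def by blast
qed

lemma good_windows_exist:
  assumes wf: "wf_ograph G" and short: "l_empty l G"
    and gaps: "\<And>u. s \<le> u \<Longrightarrow> u + 1 < s + m \<Longrightarrow> gap_crossed G u"
    and range: "s + m \<le> ord_of G + 1" "1 \<le> s" and m: "4 * k * l \<le> m"
  obtains W where "good_windows G l k s W"
proof -
  have "\<exists>T. 1 \<le> a \<longrightarrow> a \<le> l \<longrightarrow> t < k \<longrightarrow> good_window G l s t a T" for a t
    using good_window_exists[OF wf short gaps range m, of a t] by blast
  then have "\<exists>W. \<forall>a t. 1 \<le> a \<longrightarrow> a \<le> l \<longrightarrow> t < k \<longrightarrow> good_window G l s t a (W a t)"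
    by (intro choice allI)
  then show ?thesis
    using that unfolding good_windows_def by blast
qed

definition compositions :: "nat \<Rightarrow> nat \<Rightarrow> nat list set" where
  "compositions n l = {xs. sum_list xs = n \<and> set xs \<subseteq> {1..l}}"

lemma length_le_sum_list: "0 \<notin> set xs \<Longrightarrow> length xs \<le> sum_list (xs :: nat list)"
  by (induction xs) (auto simp: Suc_le_eq)

lemma finite_compositions: "finite (compositions n l)"
proof (rule finite_subset)
  show "compositions n l \<subseteq> {xs. set xs \<subseteq> {0..n} \<and> length xs \<le> n}"
    unfolding compositions_def using length_le_sum_list member_le_sum_list by fastforce
  show "finite {xs. set xs \<subseteq> {0..n} \<and> length xs \<le> n}"
    by (rule finite_lists_length_le) simp
qed

lemma compositions_Suc:
  "compositions (Suc n) l = (\<Union>a\<in>{1..min l (Suc n)}. (#) a ` compositions (Suc n - a) l)"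
proof (intro equalityI subsetI)
  fix xs assume xs: "xs \<in> compositions (Suc n) l"
  then obtain a ys where "xs = a # ys"
    unfolding compositions_def by (cases xs) auto
  moreover from xs this have "a \<in> {1..min l (Suc n)}" "ys \<in> compositions (Suc n - a) l"
    unfolding compositions_def by auto
  ultimately show "xs \<in> (\<Union>a\<in>{1..min l (Suc n)}. (#) a ` compositions (Suc n - a) l)"
    by blast
qed (auto simp: compositions_def)

lemma card_compositions: "card (compositions n l) = F n l"
proof (induction n rule: less_induct)
  case (less n)
  show ?case
  proof (cases n)
    case 0
    have "xs = []" if "xs \<in> compositions 0 l" for xs
    proof -
      have "0 \<notin> set xs" "sum_list xs = 0"
        using that unfolding compositions_def by auto
      then have "length xs \<le> 0"
        using length_le_sum_list[of xs] by metis
      then show ?thesis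
        by simp
    qed
    then have "compositions 0 l = {[]}"
      unfolding compositions_def by auto
    then show ?thesis
      using 0 by simp
  next
    case (Suc m)
    have "card (compositions (Suc m) l) = (\<Sum>a\<in>{1..min l (Suc m)}. card ((#) a ` compositions (Suc m - a) l))"
      unfolding compositions_Suc by (rule card_UN_disjoint) (auto simp: finite_compositions)
    also have "\<dots> = (\<Sum>a\<in>{1..min l (Suc m)}. F (Suc m - a) l)"
      using less Suc by (intro sum.cong) (simp_all add: card_image)
    finally show ?thesis
      using Suc by simp
  qed
qed

fun window_union :: "(nat \<Rightarrow> nat \<Rightarrow> nat set) \<Rightarrow> nat list \<Rightarrow> nat \<Rightarrow> nat set" where
  "window_union W [] t = {}"
| "window_union W (a # xs) t = W a t \<union> window_union W xs (Suc t)"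

lemma window_union_props:
  assumes good: "good_windows G l k s W"
  shows "set xs \<subseteq> {1..l} \<Longrightarrow> t + length xs \<le> k \<Longrightarrow>
    finite (window_union W xs t) \<and> card (window_union W xs t) = sum_list xs \<and>
    window_union W xs t \<subseteq> {1..ord_of G} \<and> window_union W xs t \<subseteq> {s + 4 * l * t <..}"
proof (induction xs arbitrary: t)
  case Nil
  then show ?case by simp
next
  case (Cons a xs)
  let ?R = "window_union W xs (Suc t)"
  have W: "finite (W a t)" "card (W a t) = a" "W a t \<subseteq> {1..ord_of G}"
    "W a t \<subseteq> {s + 4 * l * t <..< s + 4 * l * t + 3 * l}"
    using good Cons.prems unfolding good_windows_def good_window_def by auto
  have R: "finite ?R" "card ?R = sum_list xs" "?R \<subseteq> {1..ord_of G}" "?R \<subseteq> {s + 4 * l * Suc t <..}"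
    using Cons.IH[of "Suc t"] Cons.prems by auto
  have "W a t \<inter> ?R = {}"
    using W(4) R(4) by fastforce
  then show ?case
    using W R by (auto simp: card_Un_disjoint)
qed

lemma ord_of_induced_window_union:
  assumes "good_windows G l k s W" "set xs \<subseteq> {1..l}" "t + length xs \<le> k"
  shows "ord_of (induced G (window_union W xs t)) = sum_list xs"
  using window_union_props[OF assms] by simp

lemma induced_window_union_Cons:
  assumes good: "good_windows G l k s W" and short: "l_empty l G"
    and parts: "set (a # xs) \<subseteq> {1..l}" and len: "t + length (a # xs) \<le> k"
  shows "induced G (window_union W (a # xs) t) =
    oplus (induced G (W a t)) (induced G (window_union W xs (Suc t)))"
proof -
  let ?R = "window_union W xs (Suc t)"
  have W: "finite (W a t)" "W a t \<subseteq> {s + 4 * l * t <..< s + 4 * l * t + 3 * l}"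
    using good parts len unfolding good_windows_def good_window_def by auto
  have R: "finite ?R" "?R \<subseteq> {s + 4 * l * Suc t <..}"
    using window_union_props[OF good, of xs "Suc t"] parts len by auto
  have "x + l < y" if "x \<in> W a t" "y \<in> ?R" for x y
    using that W(2) R(2) by fastforce
  then have "\<forall>x\<in>W a t. \<forall>y\<in>?R. x < y \<and> (x, y) \<notin> edges G"
    using short unfolding l_empty_def by fastforce
  then show ?thesis
    using induced_Un_oplus[OF W(1) R(1)] by simp
qed

lemma induced_window_union_inj:
  assumes good: "good_windows G l k s W" and short: "l_empty l G"
  shows "set xs \<subseteq> {1..l} \<Longrightarrow> t + length xs \<le> k \<Longrightarrow> set ys \<subseteq> {1..l} \<Longrightarrow> t + length ys \<le> k \<Longrightarrow>
    induced G (window_union W xs t) = induced G (window_union W ys t) \<Longrightarrow> xs = ys"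
proof (induction xs arbitrary: ys t)
  case Nil
  have "sum_list ys = ord_of (induced G (window_union W ys t))"
    using ord_of_induced_window_union[OF good Nil.prems(3,4)] by simp
  also have "\<dots> = 0"
    using Nil.prems(5)[symmetric] by simp
  finally show ?case
    using Nil.prems(3) by (cases ys) auto
next
  case (Cons a xs)
  show ?case
  proof (cases ys)
    case Nil
    have "sum_list (a # xs) = ord_of (induced G (window_union W (a # xs) t))"
      using ord_of_induced_window_union[OF good Cons.prems(1,2)] by simp
    also have "\<dots> = 0"
      using Cons.prems(5) Nil by simp
    finally show ?thesis
      using Cons.prems(1) by simp
  next
    case (Cons b ys')
    have a: "a \<in> {1..l}" and b: "b \<in> {1..l}"
      using Cons.prems(1,3) \<open>ys = b # ys'\<close> by auto
    have t: "t < k"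
      using Cons.prems(2) by simp
    have first: "irreducible (induced G (W c t))" "1 \<le> ord_of (induced G (W c t))" "card (W c t) = c"
      if "c \<in> {1..l}" for c
      using good that t unfolding good_windows_def good_window_def by auto
    have "oplus (induced G (W a t)) (induced G (window_union W xs (Suc t))) =
        oplus (induced G (W b t)) (induced G (window_union W ys' (Suc t)))"
      using induced_window_union_Cons[OF good short Cons.prems(1,2)]
        induced_window_union_Cons[OF good short, of b ys' t] Cons.prems(3-5) \<open>ys = b # ys'\<close>
      by simp
    from oplus_cancel[OF this wf_induced wf_induced wf_induced wf_induced
        first(1)[OF a] first(1)[OF b] first(2)[OF a] first(2)[OF b]]
    have heads: "induced G (W a t) = induced G (W b t)"
      and tails: "induced G (window_union W xs (Suc t)) = induced G (window_union W ys' (Suc t))"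
      by simp_all
    have "a = b"
      using arg_cong[OF heads, of ord_of] first(3)[OF a] first(3)[OF b] by simp
    moreover have "xs = ys'"
      using Cons.IH[OF _ _ _ _ tails] Cons.prems \<open>ys = b # ys'\<close> by simp
    ultimately show ?thesis
      using \<open>ys = b # ys'\<close> by simp
  qed
qed

lemma F_le_S_if_good_windows:
  assumes good: "good_windows G l k s W" and short: "l_empty l G" and n: "n \<le> k"
  shows "F n l \<le> S n G"
proof -
  let ?f = "\<lambda>xs. induced G (window_union W xs 0)"
  have len: "length xs \<le> k" if "xs \<in> compositions n l" for xs
  proof -
    have "0 \<notin> set xs" "sum_list xs = n"
      using that unfolding compositions_def by auto
    then show ?thesis
      using length_le_sum_list[of xs] n by simp
  qed
  have "inj_on ?f (compositions n l)"
  proof (rule inj_onI)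
    fix xs ys assume xs: "xs \<in> compositions n l" and ys: "ys \<in> compositions n l" and "?f xs = ?f ys"
    with len[OF xs] len[OF ys] show "xs = ys"
      using induced_window_union_inj[OF good short, of xs 0 ys] unfolding compositions_def by simp
  qed
  moreover have "?f ` compositions n l \<subseteq> {induced G A | A. A \<subseteq> {1..ord_of G} \<and> card A = n}"
  proof
    fix H assume "H \<in> ?f ` compositions n l"
    then obtain xs where xs: "xs \<in> compositions n l" "H = ?f xs"
      by blast
    then have "window_union W xs 0 \<subseteq> {1..ord_of G}" "card (window_union W xs 0) = n"
      using window_union_props[OF good, of xs 0] len[OF xs(1)] unfolding compositions_def by auto
    with xs(2) show "H \<in> {induced G A | A. A \<subseteq> {1..ord_of G} \<and> card A = n}"
      by blast
  qed
  moreover have "finite {induced G A | A. A \<subseteq> {1..ord_of G} \<and> card A = n}"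
    by (rule finite_subset[of _ "induced G ` Pow {1..ord_of G}"]) auto
  ultimately show ?thesis
    unfolding S_def card_compositions[symmetric] by (rule card_inj_on_le)
qed

theorem lemma16:
  fixes k l :: nat and G :: ograph
  assumes "wf_ograph G" and "l_empty l G"
    and "block_decomposition G Gs"
    and "\<exists>B\<in>set Gs. ord_of B \<ge> 4 * k * l"
  shows "\<forall>n \<le> k. S n G \<ge> F n l"
proof -
  obtain B where B: "B \<in> set Gs" "4 * k * l \<le> ord_of B"
    using assms(4) by blast
  obtain s where "1 \<le> s" "s + ord_of B \<le> ord_of G + 1"
    and "\<And>u. s \<le> u \<Longrightarrow> u + 1 < s + ord_of B \<Longrightarrow> gap_crossed G u"
    using block_gaps_crossed[OF assms(3) B(1)] by blast
  then obtain W where "good_windows G l k s W"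
    using good_windows_exist[OF assms(1,2)] B(2) by metis
  then show ?thesis
    using F_le_S_if_good_windows assms(2) by blast
qed

end
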